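(* Let $I$ be a weakly primary ideal of a ring $R$, and suppose $(\sqrt{I})^n\subseteq I$ for some positive integer $n$. Then $I$ is a weakly $n$-absorbing ideal of $R$.
   Context: All rings are commutative with $1\neq0$. A proper ideal $I$ of $R$ is weakly primary if whenever $a,b\in R$ and $0\neq ab\in I$, then $a\in I$ or $b\in\sqrt{I}$. A proper ideal $I$ is weakly $n$-absorbing if whenever $0\neq a_1\cdots a_{n+1}\in I$ with $a_1,\dots,a_{n+1}\in R$, there are $n$ of the $a_i$'s whose product is in $I$. *)

theory Defs
  imports "HOL-Algebra.Algebra"
begin

definition radical :: "('a, 'b) ring_scheme \<Rightarrow> 'a set \<Rightarrow> 'a set" where
  "radical R I = {a \<in> carrier R. \<exists>k::nat. a [^]\<^bsub>R\<^esub> k \<in> I}"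

definition weakly_primary :: "('a, 'b) ring_scheme \<Rightarrow> 'a set \<Rightarrow> bool" where
  "weakly_primary R I \<longleftrightarrow> ideal I R \<and> I \<noteq> carrier R \<and>
     (\<forall>a\<in>carrier R. \<forall>b\<in>carrier R.
        a \<otimes>\<^bsub>R\<^esub> b \<noteq> \<zero>\<^bsub>R\<^esub> \<and> a \<otimes>\<^bsub>R\<^esub> b \<in> I \<longrightarrow> a \<in> I \<or> b \<in> radical R I)"

definition weakly_n_absorbing :: "('a, 'b) ring_scheme \<Rightarrow> nat \<Rightarrow> 'a set \<Rightarrow> bool" where
  "weakly_n_absorbing R n I \<longleftrightarrow> ideal I R \<and> I \<noteq> carrier R \<and>
     (\<forall>a \<in> {..n} \<rightarrow> carrier R.
        finprod R a {..n} \<noteq> \<zero>\<^bsub>R\<^esub> \<and> finprod R a {..n} \<in> I \<longrightarrow>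
        (\<exists>j\<in>{..n}. finprod R a ({..n} - {j}) \<in> I))"

end

theory Submission
  imports Defs
begin

text \<open>Given a_0 \<cdots> a_n \<noteq> 0 in I, either some factor a_j lies outside \<surd>I, and then weak
  primality applied to (\<Prod>_{i\<noteq>j} a_i) \<cdot> a_j puts the product of the remaining n factors
  into I; or every factor lies in \<surd>I, and then a_0 \<cdots> a_{n-1} \<in> (\<surd>I)^n \<subseteq> I.\<close>

lemma (in cring) finprod_in_set_pow:
  fixes k :: nat
  assumes "J \<subseteq> carrier R" and "f \<in> {..<k} \<rightarrow> J"
  shows "finprod R f {..<k} \<in> J [^]\<^bsub>ideals_set R\<^esub> k"
  using assms(2)
proof (induction k)
  case 0
  show ?case by (simp add: ideals_set_def)
next
  case (Suc k)
  have f_carrier: "f \<in> {..<k} \<rightarrow> carrier R" "f k \<in> carrier R"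
    using Suc.prems assms(1) by auto
  have "finprod R f {..<k} \<in> J [^]\<^bsub>ideals_set R\<^esub> k"
    using Suc.prems by (intro Suc.IH) auto
  moreover have "finprod R f {..<Suc k} = finprod R f {..<k} \<otimes> f k"
    using f_carrier by (simp add: lessThan_Suc m_comm)
  moreover have "f k \<in> J" using Suc.prems by auto
  ultimately show ?case
    by (simp add: ideals_set_def ideal_prod.prod)
qed

lemma (in comm_monoid) finprod_split_off:
  assumes "finite A" and "j \<in> A" and "f \<in> A \<rightarrow> carrier G"
  shows "finprod G f A = finprod G f (A - {j}) \<otimes> f j"
proof -
  have closed: "finprod G f (A - {j}) \<in> carrier G" "f j \<in> carrier G"
    using assms(2,3) by (auto intro: finprod_closed)
  have "finprod G f A = finprod G f (insert j (A - {j}))"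
    using assms(2) by (simp add: insert_absorb)
  also have "\<dots> = f j \<otimes> finprod G f (A - {j})"
    using assms by (intro finprod_insert) auto
  also have "\<dots> = finprod G f (A - {j}) \<otimes> f j"
    using closed(2,1) by (rule m_comm)
  finally show ?thesis .
qed

lemma (in cring) weakly_primary_drop_factor:
  assumes "weakly_primary R I" and "finite A" and "a \<in> A \<rightarrow> carrier R"
    and "j \<in> A" and "a j \<notin> radical R I"
    and "finprod R a A \<noteq> \<zero>" and "finprod R a A \<in> I"
  shows "finprod R a (A - {j}) \<in> I"
proof -
  have split: "finprod R a A = finprod R a (A - {j}) \<otimes> a j"
    using assms(2,4,3) by (rule finprod_split_off)
  have "finprod R a (A - {j}) \<in> carrier R" "a j \<in> carrier R"
    using assms(3,4) by (auto intro: finprod_closed)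
  then show ?thesis
    using assms(1,5-7) unfolding weakly_primary_def split by blast
qed

theorem mainTheorem15:
  fixes R (structure) and I :: "'a set" and n :: nat
  assumes "cring R" and "\<one>\<^bsub>R\<^esub> \<noteq> \<zero>\<^bsub>R\<^esub>"
    and "weakly_primary R I"
    and "n > 0"
    and "(radical R I) [^]\<^bsub>ideals_set R\<^esub> n \<subseteq> I"
  shows "weakly_n_absorbing R n I"
proof -
  interpret cring R by fact
  have "\<exists>j\<in>{..n}. finprod R a ({..n} - {j}) \<in> I"
    if a: "a \<in> {..n} \<rightarrow> carrier R"
      and prod: "finprod R a {..n} \<noteq> \<zero>" "finprod R a {..n} \<in> I" for a
  proof (cases "\<forall>i\<in>{..n}. a i \<in> radical R I")
    case True
    have "finprod R a {..<n} \<in> (radical R I) [^]\<^bsub>ideals_set R\<^esub> n"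
      using True by (intro finprod_in_set_pow) (auto simp: radical_def)
    moreover have "{..n} - {n} = {..<n}" by auto
    ultimately show ?thesis using assms(5) by (metis atMost_iff order_refl subsetD)
  next
    case False
    then obtain j where j: "j \<in> {..n}" "a j \<notin> radical R I" by blast
    then have "finprod R a ({..n} - {j}) \<in> I"
      by (intro weakly_primary_drop_factor[OF assms(3) finite_atMost a _ _ prod])
    with j show ?thesis by blast
  qed
  with assms(3) show ?thesis
    unfolding weakly_n_absorbing_def weakly_primary_def by blast
qed

end
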